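(* Let $\mathcal{A}$ be a small category, and let $\Lambda$ be a class of dinatural transformations between functors $\mathcal{A}^{op}\times\mathcal{A}\to\mathbf{Set}$ such that: (i) for every $\alpha:P\Rightarrow Q$ in $\Lambda$ and every functor $R:\mathcal{A}^{op}\times\mathcal{A}\to\mathbf{Set}$, the dinatural transformation $\gamma_\alpha$ from $(x',x)\mapsto\mathbf{Set}(Q(x,x'),R(x',x))$ to $(x',x)\mapsto\mathbf{Set}(P(x,x'),R(x',x))$ with components $\gamma_{\alpha,x}(g)=g\circ\alpha_x$ belongs to $\Lambda$; (ii) for every $\gamma:S\Rightarrow T$ in $\Lambda$, the family $\varepsilon_S;\gamma$, with components $\int_{y\in\mathcal{A}}S(y,y)\to T(x,x)$, $s\mapsto\gamma_x(s_x)$, is a dinatural transformation from the constant functor at $\int_{y}S(y,y)$ to $T$. Then for every $\alpha:P\Rightarrow Q$ in $\Lambda$ and every (not necessarily in $\Lambda$) dinatural transformation $\beta:Q\Rightarrow R$, the family $\beta_x\circ\alpha_x:P(x,x)\to R(x,x)$ is a dinatural transformation $P\Rightarrow R$.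
   Context: For $F,G:\mathcal{A}^{op}\times\mathcal{A}\to\mathbf{Set}$, a dinatural transformation is a family $\alpha_x:F(x,x)\to G(x,x)$ such that for every $f:a\to b$: $G(f,\mathrm{id}_b)\circ\alpha_b\circ F(\mathrm{id}_b,f)=G(\mathrm{id}_a,f)\circ\alpha_a\circ F(f,\mathrm{id}_a)$. For $S:\mathcal{A}^{op}\times\mathcal{A}\to\mathbf{Set}$, the end $\int_yS(y,y)$ is the set of families $(s_y\in S(y,y))_y$ with $S(\mathrm{id}_a,f)(s_a)=S(f,\mathrm{id}_b)(s_b)$ for all $f:a\to b$; the projections $\varepsilon_S:s\mapsto s_x$ form a dinatural transformation from the constant functor at $\int_yS(y,y)$ to $S$. *)

theory Defs
  imports "HOL-Library.FuncSet"
begin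

text \<open>Small categories: objects of type 'o, arrows of type 'm (a HOL set is small).
  ccomp C g f is the composite g o f.\<close>

record ('o, 'm) cat =
  Ob :: "'o set"
  Ar :: "'m set"
  cdom :: "'m \<Rightarrow> 'o"
  ccod :: "'m \<Rightarrow> 'o"
  cid :: "'o \<Rightarrow> 'm"
  ccomp :: "'m \<Rightarrow> 'm \<Rightarrow> 'm"

definition hom :: "('o, 'm) cat \<Rightarrow> 'o \<Rightarrow> 'o \<Rightarrow> 'm set" where
  "hom C a b = {f \<in> Ar C. cdom C f = a \<and> ccod C f = b}"

definition category :: "('o, 'm) cat \<Rightarrow> bool" where
  "category C \<longleftrightarrow>
     (\<forall>f \<in> Ar C. cdom C f \<in> Ob C \<and> ccod C f \<in> Ob C) \<and>
     (\<forall>a \<in> Ob C. cid C a \<in> hom C a a) \<and>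
     (\<forall>f \<in> Ar C. \<forall>g \<in> Ar C. ccod C f = cdom C g \<longrightarrow>
         ccomp C g f \<in> hom C (cdom C f) (ccod C g)) \<and>
     (\<forall>f \<in> Ar C. ccomp C (cid C (ccod C f)) f = f \<and> ccomp C f (cid C (cdom C f)) = f) \<and>
     (\<forall>f \<in> Ar C. \<forall>g \<in> Ar C. \<forall>h \<in> Ar C. ccod C f = cdom C g \<longrightarrow> ccod C g = cdom C h \<longrightarrow>
         ccomp C h (ccomp C g f) = ccomp C (ccomp C h g) f)"

text \<open>Functors A^op x A -> Set. For f : a -> b and g : c -> d in A,
  FM F f g : FO F b c -> FO F a d (contravariant in the first argument).\<close>

record ('o, 'm, 'v) bifun =
  FO :: "'o \<Rightarrow> 'o \<Rightarrow> 'v set"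
  FM :: "'m \<Rightarrow> 'm \<Rightarrow> 'v \<Rightarrow> 'v"

definition is_bifunctor :: "('o, 'm) cat \<Rightarrow> ('o, 'm, 'v) bifun \<Rightarrow> bool" where
  "is_bifunctor C F \<longleftrightarrow>
     (\<forall>a b c d f g. f \<in> hom C a b \<longrightarrow> g \<in> hom C c d \<longrightarrow> FM F f g \<in> FO F b c \<rightarrow> FO F a d) \<and>
     (\<forall>a \<in> Ob C. \<forall>b \<in> Ob C. \<forall>x \<in> FO F a b. FM F (cid C a) (cid C b) x = x) \<and>
     (\<forall>a b c d a' d' f f' g g' x. f \<in> hom C a b \<longrightarrow> f' \<in> hom C a' a \<longrightarrow>
         g \<in> hom C c d \<longrightarrow> g' \<in> hom C d d' \<longrightarrow> x \<in> FO F b c \<longrightarrow>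
         FM F (ccomp C f f') (ccomp C g' g) x = FM F f' g' (FM F f g x))"

definition dinatural ::
  "('o, 'm) cat \<Rightarrow> ('o, 'm, 'u) bifun \<Rightarrow> ('o, 'm, 'v) bifun \<Rightarrow> ('o \<Rightarrow> 'u \<Rightarrow> 'v) \<Rightarrow> bool" where
  "dinatural C F G \<alpha> \<longleftrightarrow>
     (\<forall>x \<in> Ob C. \<alpha> x \<in> FO F x x \<rightarrow> FO G x x) \<and>
     (\<forall>a b f. f \<in> hom C a b \<longrightarrow> (\<forall>u \<in> FO F b a.
        FM G f (cid C b) (\<alpha> b (FM F (cid C b) f u)) =
        FM G (cid C a) f (\<alpha> a (FM F f (cid C a) u))))"

text \<open>The functor (x',x) |-> Set(Q(x,x'), R(x',x)); elements are extensional functions.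
  For f : a' -> b' and g : c -> d, h in Set(Q(c,b'),R(b',c)) is sent to R(f,g) o h o Q(g,f).\<close>

definition homfun :: "('o, 'm) cat \<Rightarrow> ('o, 'm, 'q) bifun \<Rightarrow> ('o, 'm, 'r) bifun \<Rightarrow> ('o, 'm, 'q \<Rightarrow> 'r) bifun" where
  "homfun C Q R = \<lparr> FO = (\<lambda>x' x. FO Q x x' \<rightarrow>\<^sub>E FO R x' x),
                    FM = (\<lambda>f g h. restrict (\<lambda>u. FM R f g (h (FM Q g f u))) (FO Q (ccod C g) (cdom C f))) \<rparr>"

definition precomp :: "('o, 'm, 'p) bifun \<Rightarrow> ('o \<Rightarrow> 'p \<Rightarrow> 'q) \<Rightarrow> 'o \<Rightarrow> ('q \<Rightarrow> 'r) \<Rightarrow> ('p \<Rightarrow> 'r)" where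
  "precomp P \<alpha> x g = restrict (\<lambda>u. g (\<alpha> x u)) (FO P x x)"

definition endset :: "('o, 'm) cat \<Rightarrow> ('o, 'm, 'v) bifun \<Rightarrow> ('o \<Rightarrow> 'v) set" where
  "endset C S = {s. s \<in> (\<Pi>\<^sub>E y\<in>Ob C. FO S y y) \<and>
      (\<forall>a b f. f \<in> hom C a b \<longrightarrow> FM S (cid C a) f (s a) = FM S f (cid C b) (s b))}"

definition constfun :: "'v set \<Rightarrow> ('o, 'm, 'v) bifun" where
  "constfun X = \<lparr> FO = (\<lambda>_ _. X), FM = (\<lambda>_ _ x. x) \<rparr>"

definition proj_then :: "('o \<Rightarrow> 'u \<Rightarrow> 'v) \<Rightarrow> 'o \<Rightarrow> ('o \<Rightarrow> 'u) \<Rightarrow> 'v" where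
  "proj_then \<gamma> x s = \<gamma> x (s x)"

end

theory Submission
  imports Defs
begin

text \<open>Dinaturality of \<beta> : Q \<Rightarrow> R says precisely that the family of its components is an
  element of the end of (x',x) \<mapsto> Set(Q(x,x'), R(x',x)). Feeding this element to the
  dinatural transformation \<epsilon>;\<gamma> of condition (ii), where \<gamma> = (g \<mapsto> g \<circ> \<alpha>) comes from
  condition (i), and evaluating at a point of P(b,a) yields the dinaturality square for
  \<beta> \<circ> \<alpha>.\<close>

lemma hom_dom_cod:
  assumes "f \<in> hom C a b"
  shows "cdom C f = a" "ccod C f = b"
  using assms unfolding hom_def by auto

lemma hom_Ob:
  assumes "category C" "f \<in> hom C a b"
  shows "a \<in> Ob C" "b \<in> Ob C"
  using assms unfolding category_def hom_def by auto

lemma cid_hom: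
  assumes "category C" "a \<in> Ob C"
  shows "cid C a \<in> hom C a a"
  using assms unfolding category_def by blast

lemma bifunctor_FM_in:
  assumes "is_bifunctor C F" "f \<in> hom C a b" "g \<in> hom C c d" "x \<in> FO F b c"
  shows "FM F f g x \<in> FO F a d"
  using assms unfolding is_bifunctor_def by (metis (no_types) PiE)

lemma dinatural_in:
  assumes "dinatural C F G \<alpha>" "x \<in> Ob C" "u \<in> FO F x x"
  shows "\<alpha> x u \<in> FO G x x"
  using assms unfolding dinatural_def by blast

lemma dinaturalD:
  assumes "dinatural C F G \<alpha>" "f \<in> hom C a b" "u \<in> FO F b a"
  shows "FM G f (cid C b) (\<alpha> b (FM F (cid C b) f u)) = FM G (cid C a) f (\<alpha> a (FM F f (cid C a) u))"
  using assms unfolding dinatural_def by blast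

lemma dinatural_in_endset_homfun:
  assumes cat: "category C" and Q: "is_bifunctor C Q" and \<beta>: "dinatural C Q R \<beta>"
  shows "(\<lambda>y\<in>Ob C. restrict (\<beta> y) (FO Q y y)) \<in> endset C (homfun C Q R)"
    (is "?s \<in> _")
  unfolding endset_def
proof (intro CollectI conjI allI impI)
  show "?s \<in> (\<Pi>\<^sub>E y\<in>Ob C. FO (homfun C Q R) y y)"
    using \<beta> by (auto simp: homfun_def dinatural_in)
next
  fix a b f
  assume f: "f \<in> hom C a b"
  note ab = hom_Ob[OF cat f]
  note ia = cid_hom[OF cat ab(1)] and ib = cid_hom[OF cat ab(2)]
  have "FM R (cid C a) f (?s a (FM Q f (cid C a) u)) = FM R f (cid C b) (?s b (FM Q (cid C b) f u))"
    if u: "u \<in> FO Q b a" for u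
  proof -
    have "FM Q f (cid C a) u \<in> FO Q a a" "FM Q (cid C b) f u \<in> FO Q b b"
      using bifunctor_FM_in[OF Q] f ia ib u by blast+
    with ab dinaturalD[OF \<beta> f u] show ?thesis
      by simp
  qed
  then show "FM (homfun C Q R) (cid C a) f (?s a) = FM (homfun C Q R) f (cid C b) (?s b)"
    unfolding homfun_def
    by (simp only: bifun.select_convs hom_dom_cod[OF f] hom_dom_cod[OF ia] hom_dom_cod[OF ib])
      (rule restrict_ext)
qed

lemma dinatural_constfun_homfunD:
  assumes cat: "category C" and P: "is_bifunctor C P"
    and \<gamma>: "dinatural C (constfun X) (homfun C P R) \<gamma>"
    and s: "s \<in> X" and f: "f \<in> hom C a b" and u: "u \<in> FO P b a"
  shows "FM R f (cid C b) (\<gamma> b s (FM P (cid C b) f u)) = FM R (cid C a) f (\<gamma> a s (FM P f (cid C a) u))"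
proof -
  note ab = hom_Ob[OF cat f]
  note ia = cid_hom[OF cat ab(1)] and ib = cid_hom[OF cat ab(2)]
  have "FM (homfun C P R) f (cid C b) (\<gamma> b s) = FM (homfun C P R) (cid C a) f (\<gamma> a s)"
    using dinaturalD[OF \<gamma> f] s by (simp add: constfun_def)
  then have "FM (homfun C P R) f (cid C b) (\<gamma> b s) u = FM (homfun C P R) (cid C a) f (\<gamma> a s) u"
    by simp
  with u show ?thesis
    by (simp add: homfun_def hom_dom_cod[OF f] hom_dom_cod[OF ia] hom_dom_cod[OF ib])
qed

lemma proj_then_precomp_apply:
  assumes "x \<in> Ob C" "v \<in> FO P x x" "\<alpha> x v \<in> FO Q x x"
  shows "proj_then (precomp P \<alpha>) x (\<lambda>y\<in>Ob C. restrict (\<beta> y) (FO Q y y)) v = \<beta> x (\<alpha> x v)"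
  using assms by (simp add: proj_then_def precomp_def)

theorem mainTheorem16:
  fixes A :: "('o, 'm) cat"
    and P :: "('o, 'm, 'p) bifun" and Q :: "('o, 'm, 'q) bifun" and R :: "('o, 'm, 'r) bifun"
    and Lam1 :: "('o, 'm, 'p) bifun \<Rightarrow> ('o, 'm, 'q) bifun \<Rightarrow> ('o \<Rightarrow> 'p \<Rightarrow> 'q) \<Rightarrow> bool"
    and Lam2 :: "('o, 'm, 'q \<Rightarrow> 'r) bifun \<Rightarrow> ('o, 'm, 'p \<Rightarrow> 'r) bifun
                   \<Rightarrow> ('o \<Rightarrow> ('q \<Rightarrow> 'r) \<Rightarrow> ('p \<Rightarrow> 'r)) \<Rightarrow> bool"
  assumes cat: "category A"
    and Lam1_dinat: "\<And>P Q \<alpha>. Lam1 P Q \<alpha> \<Longrightarrow>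
           is_bifunctor A P \<and> is_bifunctor A Q \<and> dinatural A P Q \<alpha>"
    and Lam2_dinat: "\<And>S T \<gamma>. Lam2 S T \<gamma> \<Longrightarrow>
           is_bifunctor A S \<and> is_bifunctor A T \<and> dinatural A S T \<gamma>"
    and cond_i: "\<And>P Q \<alpha> R. Lam1 P Q \<alpha> \<Longrightarrow> is_bifunctor A R \<Longrightarrow>
           Lam2 (homfun A Q R) (homfun A P R) (precomp P \<alpha>)"
    and cond_ii: "\<And>S T \<gamma>. Lam2 S T \<gamma> \<Longrightarrow>
           dinatural A (constfun (endset A S)) T (proj_then \<gamma>)"
    and alpha: "Lam1 P Q \<alpha>"
    and R: "is_bifunctor A R"
    and beta: "dinatural A Q R \<beta>"
  shows "dinatural A P R (\<lambda>x u. \<beta> x (\<alpha> x u))"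
proof -
  from Lam1_dinat[OF alpha] have P: "is_bifunctor A P" and Q: "is_bifunctor A Q"
    and \<alpha>: "dinatural A P Q \<alpha>" by auto
  have \<epsilon>\<gamma>: "dinatural A (constfun (endset A (homfun A Q R))) (homfun A P R) (proj_then (precomp P \<alpha>))"
    using cond_ii[OF cond_i[OF alpha R]] .
  have \<beta>_end: "(\<lambda>y\<in>Ob A. restrict (\<beta> y) (FO Q y y)) \<in> endset A (homfun A Q R)"
    using dinatural_in_endset_homfun[OF cat Q beta] .
  show ?thesis
    unfolding dinatural_def
  proof (intro conjI ballI allI impI)
    show "(\<lambda>u. \<beta> x (\<alpha> x u)) \<in> FO P x x \<rightarrow> FO R x x" if "x \<in> Ob A" for x
      using that dinatural_in[OF \<alpha>] dinatural_in[OF beta] by blast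
  next
    fix a b f u
    assume f: "f \<in> hom A a b" and u: "u \<in> FO P b a"
    note ab = hom_Ob[OF cat f]
    have "FM P f (cid A a) u \<in> FO P a a" "FM P (cid A b) f u \<in> FO P b b"
      using bifunctor_FM_in[OF P] f cid_hom[OF cat] ab u by blast+
    with dinatural_constfun_homfunD[OF cat P \<epsilon>\<gamma> \<beta>_end f u] ab
    show "FM R f (cid A b) (\<beta> b (\<alpha> b (FM P (cid A b) f u))) =
          FM R (cid A a) f (\<beta> a (\<alpha> a (FM P f (cid A a) u)))"
      by (simp add: proj_then_precomp_apply dinatural_in[OF \<alpha>])
  qed
qed

end
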